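(* Let $X$ be a smooth projective surface over $\mathbb{C}$, $H$ an integral ample divisor class, and consider $\sigma_{\alpha,\beta}=\sigma_{\alpha H,\beta H}$ ($\alpha>0$, $\beta\in\mathbb{R}$). Let $0\to F\to E\to G\to 0$ be a sequence which is a short exact sequence in $\mathrm{Coh}^\beta(X)$ for every $(\alpha,\beta)$ on the numerical wall $W=\{(\alpha,\beta):\nu_{\alpha,\beta}(F)=\nu_{\alpha,\beta}(E)\}$, and assume $W$ is a non-empty semicircle with radius $\rho_W$ and center on the $\beta$-axis. Assume $\mathrm{ch}_0(F)>\mathrm{ch}_0(E)\ge 0$. Then $$\rho_W^2\le\frac{\overline{\Delta}_H(E)}{4\,H^2\mathrm{ch}_0(F)\,\bigl(H^2\mathrm{ch}_0(F)-H^2\mathrm{ch}_0(E)\bigr)}.$$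
   Context: $\mathrm{ch}^\beta=\mathrm{ch}\cdot e^{-\beta H}$. $\mathrm{Coh}^\beta(X)$ is the tilt of $\mathrm{Coh}(X)$ consisting of objects $E$ with $\mathcal{H}^i(E)=0$ for $i\neq -1,0$, all slope HN factors of $\mathcal{H}^{-1}(E)$ having $H\cdot\mathrm{ch}^\beta_1/\mathrm{ch}_0\le0$ and all slope HN factors of $\mathcal{H}^0(E)$ having $H\cdot\mathrm{ch}^\beta_1/\mathrm{ch}_0>0$ (torsion sheaves have slope $+\infty$); in particular $H\cdot\mathrm{ch}^\beta_1\ge0$ on $\mathrm{Coh}^\beta(X)$. $\nu_{\alpha,\beta}=\frac{\mathrm{ch}^\beta_2-\frac{\alpha^2H^2}{2}\mathrm{ch}_0}{H\cdot\mathrm{ch}^\beta_1}$. $\overline{\Delta}_H=(H\cdot\mathrm{ch}_1)^2-2H^2\,\mathrm{ch}_0\,\mathrm{ch}_2$. *)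

theory Defs
  imports Complex_Main
begin

(* Numerical Chern data of an object on the surface X relative to the ample class H:
   a triple (ch_0, H.ch_1, ch_2).  The real number d stands for H^2 > 0. *)
type_synonym chern = "real \<times> real \<times> real"

definition ch0 :: "chern \<Rightarrow> real" where "ch0 v = fst v"
definition Hch1 :: "chern \<Rightarrow> real" where "Hch1 v = fst (snd v)"
definition ch2 :: "chern \<Rightarrow> real" where "ch2 v = snd (snd v)"

definition Hch1_beta :: "real \<Rightarrow> real \<Rightarrow> chern \<Rightarrow> real" where
  "Hch1_beta d \<beta> v = Hch1 v - \<beta> * d * ch0 v"

definition ch2_beta :: "real \<Rightarrow> real \<Rightarrow> chern \<Rightarrow> real" where
  "ch2_beta d \<beta> v = ch2 v - \<beta> * Hch1 v + \<beta>^2 / 2 * d * ch0 v"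

definition nu_num :: "real \<Rightarrow> real \<Rightarrow> real \<Rightarrow> chern \<Rightarrow> real" where
  "nu_num d \<alpha> \<beta> v = ch2_beta d \<beta> v - \<alpha>^2 * d / 2 * ch0 v"

definition nu :: "real \<Rightarrow> real \<Rightarrow> real \<Rightarrow> chern \<Rightarrow> real" where
  "nu d \<alpha> \<beta> v = nu_num d \<alpha> \<beta> v / Hch1_beta d \<beta> v"

definition Delta_H :: "real \<Rightarrow> chern \<Rightarrow> real" where
  "Delta_H d v = (Hch1 v)^2 - 2 * d * ch0 v * ch2 v"

(* numerical wall {(alpha,beta) : alpha > 0, nu(F) = nu(E)}, with the equality of slopes
   written in cross-multiplied form (slope +infinity when H.ch_1^beta = 0) *)
definition numerical_wall :: "real \<Rightarrow> chern \<Rightarrow> chern \<Rightarrow> (real \<times> real) set" where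
  "numerical_wall d F E = {(\<alpha>, \<beta>). \<alpha> > 0 \<and>
      nu_num d \<alpha> \<beta> F * Hch1_beta d \<beta> E = nu_num d \<alpha> \<beta> E * Hch1_beta d \<beta> F}"

end

theory Submission
  imports Defs
begin

text \<open>Twist all Chern data at the centre \<open>s\<close> of the wall and write \<open>\<beta> = s + t\<close>.
  The wall equation becomes \<open>M - (d K/2)(\<alpha>\<^sup>2 + t\<^sup>2) + d L t = 0\<close> with \<open>K, L, M\<close> quadratic
  in the twisted characters of \<open>F\<close> and \<open>E\<close>; since its zero set is the semicircle of radius
  \<open>\<rho>\<close> about \<open>t = 0\<close>, we get \<open>L = 0\<close> and \<open>M = d K \<rho>\<^sup>2/2\<close>, which pins down
  \<open>ch\<^sub>2\<^sup>s(E) = d \<rho>\<^sup>2 ch\<^sub>0(E)/2\<close>. On the other hand \<open>H\<cdot>ch\<^sub>1\<^sup>\<beta> \<ge> 0\<close> along the whole wall,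
  i.e. for \<open>\<beta>\<close> running through \<open>(s - \<rho>, s + \<rho>)\<close>, forces
  \<open>H\<cdot>ch\<^sub>1\<^sup>s \<ge> \<rho> d \<bar>ch\<^sub>0\<bar>\<close> for \<open>F\<close> and \<open>G\<close>, hence \<open>H\<cdot>ch\<^sub>1\<^sup>s(E) \<ge> \<rho> d (2 ch\<^sub>0(F) - ch\<^sub>0(E))\<close>.
  As \<open>\<Delta>\<^sub>H\<close> is invariant under twisting, \<open>\<Delta>\<^sub>H(E) = (H\<cdot>ch\<^sub>1\<^sup>s(E))\<^sup>2 - 2 d ch\<^sub>0(E) ch\<^sub>2\<^sup>s(E)\<close>,
  and the two estimates combine to the bound.\<close>

lemma Hch1_beta_shift:
  "Hch1_beta d (s + t) v = Hch1_beta d s v - t * d * ch0 v"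
  unfolding Hch1_beta_def by (simp add: algebra_simps)

lemma ch2_beta_shift:
  "ch2_beta d (s + t) v = ch2_beta d s v - t * Hch1_beta d s v + t^2 / 2 * d * ch0 v"
  unfolding ch2_beta_def Hch1_beta_def by (simp add: algebra_simps power2_eq_square)

lemma Delta_H_twisted:
  "Delta_H d v = (Hch1_beta d s v)^2 - 2 * d * ch0 v * ch2_beta d s v"
  unfolding Delta_H_def Hch1_beta_def ch2_beta_def by (simp add: algebra_simps power2_eq_square)

lemma wall_equation_shifted:
  "nu_num d \<alpha> (s + t) F * Hch1_beta d (s + t) E - nu_num d \<alpha> (s + t) E * Hch1_beta d (s + t) F
   = (ch2_beta d s F * Hch1_beta d s E - ch2_beta d s E * Hch1_beta d s F)
     - d / 2 * (ch0 F * Hch1_beta d s E - ch0 E * Hch1_beta d s F) * (\<alpha>^2 + t^2)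
     + d * (ch0 F * ch2_beta d s E - ch0 E * ch2_beta d s F) * t"
  unfolding nu_num_def ch2_beta_shift Hch1_beta_shift
  by (simp add: field_simps power2_eq_square)

lemma semicircle_zero_set_coeffs:
  fixes a b c \<rho> :: real
  assumes zeros: "\<And>\<alpha> t. \<alpha> > 0 \<Longrightarrow> c - a * (\<alpha>^2 + t^2) + b * t = 0 \<longleftrightarrow> t^2 + \<alpha>^2 = \<rho>^2"
    and "\<rho> > 0"
  shows "b = 0" and "c = a * \<rho>^2" and "a \<noteq> 0"
proof -
  show c: "c = a * \<rho>^2"
    using zeros[of \<rho> 0] \<open>\<rho> > 0\<close> by simp
  have "(sqrt 3 * \<rho> / 2)^2 = 3 / 4 * \<rho>^2"
    by (simp add: power_mult_distrib power_divide)
  then have "c - a * \<rho>^2 + b * (\<rho> / 2) = 0"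
    using zeros[of "sqrt 3 * \<rho> / 2" "\<rho> / 2"] \<open>\<rho> > 0\<close>
    by (simp add: power_divide algebra_simps)
  then show "b = 0"
    using c \<open>\<rho> > 0\<close> by simp
  have "c - a * (2 * \<rho>)^2 \<noteq> 0"
    using zeros[of "2 * \<rho>" 0] \<open>\<rho> > 0\<close> by (simp add: power2_eq_square)
  then show "a \<noteq> 0"
    using c by auto
qed

lemma ch2_beta_at_wall_centre:
  assumes "d > 0" and "\<rho> > 0"
    and wall: "numerical_wall d F E = {(\<alpha>, \<beta>). \<alpha> > 0 \<and> (\<beta> - s)^2 + \<alpha>^2 = \<rho>^2}"
  shows "ch2_beta d s E = d * \<rho>^2 / 2 * ch0 E"
proof -
  define K where "K = ch0 F * Hch1_beta d s E - ch0 E * Hch1_beta d s F"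
  define L where "L = ch0 F * ch2_beta d s E - ch0 E * ch2_beta d s F"
  define M where "M = ch2_beta d s F * Hch1_beta d s E - ch2_beta d s E * Hch1_beta d s F"
  have "M - d / 2 * K * (\<alpha>^2 + t^2) + d * L * t = 0 \<longleftrightarrow> t^2 + \<alpha>^2 = \<rho>^2"
    if "\<alpha> > 0" for \<alpha> t
  proof -
    have "t^2 + \<alpha>^2 = \<rho>^2 \<longleftrightarrow> (\<alpha>, s + t) \<in> numerical_wall d F E"
      using that unfolding wall by simp
    also have "\<dots> \<longleftrightarrow> nu_num d \<alpha> (s + t) F * Hch1_beta d (s + t) E
        - nu_num d \<alpha> (s + t) E * Hch1_beta d (s + t) F = 0"
      using that unfolding numerical_wall_def by simp
    also have "\<dots> \<longleftrightarrow> M - d / 2 * K * (\<alpha>^2 + t^2) + d * L * t = 0"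
      unfolding wall_equation_shifted K_def L_def M_def by (simp add: algebra_simps)
    finally show ?thesis ..
  qed
  from semicircle_zero_set_coeffs[OF this \<open>\<rho> > 0\<close>]
  have "L = 0" and M: "M = d / 2 * K * \<rho>^2" and "K \<noteq> 0"
    using \<open>d > 0\<close> by auto
  have "ch2_beta d s E * K = ch0 E * M"
    using \<open>L = 0\<close> unfolding K_def L_def M_def by (simp add: algebra_simps)
  also have "\<dots> = (d * \<rho>^2 / 2 * ch0 E) * K"
    unfolding M by simp
  finally show ?thesis
    using \<open>K \<noteq> 0\<close> by simp
qed

lemma affine_nonneg_on_interval_bound:
  fixes x c \<rho> :: real
  assumes "\<rho> > 0" and nonneg: "\<And>t. -\<rho> < t \<Longrightarrow> t < \<rho> \<Longrightarrow> 0 \<le> x - t * c"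
  shows "\<rho> * \<bar>c\<bar> \<le> x"
proof -
  have "\<forall>\<^sub>F t in at_left \<rho>. 0 \<le> x - t * c"
    using eventually_at_left_real[of "-\<rho>" \<rho>] \<open>\<rho> > 0\<close> nonneg
    by (auto elim: eventually_mono)
  then have "0 \<le> x - \<rho> * c"
    by (rule tendsto_lowerbound[rotated]) (auto intro!: tendsto_eq_intros)
  moreover have "\<forall>\<^sub>F t in at_right (-\<rho>). 0 \<le> x - t * c"
    using eventually_at_right_real[of "-\<rho>" \<rho>] \<open>\<rho> > 0\<close> nonneg
    by (auto elim: eventually_mono)
  then have "0 \<le> x - (-\<rho>) * c"
    by (rule tendsto_lowerbound[rotated]) (auto intro!: tendsto_eq_intros)
  ultimately show ?thesis
    by (cases "c \<ge> 0") auto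
qed

lemma Hch1_beta_at_wall_centre_bound:
  assumes "d > 0" and "\<rho> > 0"
    and wall: "numerical_wall d F E = {(\<alpha>, \<beta>). \<alpha> > 0 \<and> (\<beta> - s)^2 + \<alpha>^2 = \<rho>^2}"
    and nonneg: "\<forall>(\<alpha>, \<beta>) \<in> numerical_wall d F E. Hch1_beta d \<beta> v \<ge> 0"
  shows "\<rho> * d * \<bar>ch0 v\<bar> \<le> Hch1_beta d s v"
proof -
  have "0 \<le> Hch1_beta d s v - t * (d * ch0 v)" if "-\<rho> < t" "t < \<rho>" for t
  proof -
    have "t^2 < \<rho>^2"
      using that by (intro power2_strict_mono) auto
    then have "(sqrt (\<rho>^2 - t^2), s + t) \<in> numerical_wall d F E"
      unfolding wall by simp
    then show ?thesis
      using nonneg Hch1_beta_shift[of d s t v] by (auto simp: algebra_simps)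
  qed
  from affine_nonneg_on_interval_bound[OF \<open>\<rho> > 0\<close> this]
  show ?thesis
    using \<open>d > 0\<close> by (simp add: abs_mult mult.assoc)
qed

theorem lemma7p2:
  fixes d s \<rho> :: real and F E G :: chern
  assumes H2_pos: "d > 0"
    and ses_ch0: "ch0 E = ch0 F + ch0 G"
    and ses_ch1: "Hch1 E = Hch1 F + Hch1 G"
    and ses_ch2: "ch2 E = ch2 F + ch2 G"
    and wall_semicircle: "numerical_wall d F E = {(\<alpha>, \<beta>). \<alpha> > 0 \<and> (\<beta> - s)^2 + \<alpha>^2 = \<rho>^2}"
    and rho_pos: "\<rho> > 0"
    and in_tilt: "\<forall>(\<alpha>, \<beta>) \<in> numerical_wall d F E.
        Hch1_beta d \<beta> F \<ge> 0 \<and> Hch1_beta d \<beta> E \<ge> 0 \<and> Hch1_beta d \<beta> G \<ge> 0"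
    and rank: "ch0 F > ch0 E" "ch0 E \<ge> 0"
  shows "\<rho>^2 \<le> Delta_H d E / (4 * (d * ch0 F) * (d * ch0 F - d * ch0 E))"
proof -
  let ?x = "Hch1_beta d s E"
  have bound_F: "\<rho> * d * \<bar>ch0 F\<bar> \<le> Hch1_beta d s F"
    using Hch1_beta_at_wall_centre_bound[OF H2_pos rho_pos wall_semicircle, of F] in_tilt
    by fastforce
  have bound_G: "\<rho> * d * \<bar>ch0 G\<bar> \<le> Hch1_beta d s G"
    using Hch1_beta_at_wall_centre_bound[OF H2_pos rho_pos wall_semicircle, of G] in_tilt
    by fastforce
  have "?x = Hch1_beta d s F + Hch1_beta d s G"
    using ses_ch0 ses_ch1 unfolding Hch1_beta_def by (simp add: algebra_simps)
  with bound_F bound_G rank ses_ch0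
  have x_bound: "\<rho> * d * (2 * ch0 F - ch0 E) \<le> ?x"
    by (simp add: algebra_simps)
  have "0 \<le> \<rho> * d * (2 * ch0 F - ch0 E)"
    using rho_pos H2_pos rank by simp
  with x_bound have "(\<rho> * d * (2 * ch0 F - ch0 E))^2 \<le> ?x^2"
    by (rule power_mono)
  then have "\<rho>^2 * (4 * (d * ch0 F) * (d * ch0 F - d * ch0 E)) \<le> Delta_H d E"
    unfolding Delta_H_twisted[of d E s] ch2_beta_at_wall_centre[OF H2_pos rho_pos wall_semicircle]
    by (simp add: algebra_simps power2_eq_square)
  moreover have "4 * (d * ch0 F) * (d * ch0 F - d * ch0 E) > 0"
    using H2_pos rank by simp
  ultimately show ?thesis
    by (simp add: le_divide_eq)
qed

end
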